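(* In the setting of the shrinking generator with $SR_1$, $SR_2$ maximal-length LFSRs of coprime lengths $L_1<L_2$, let $C_2(x)\in GF(2)[x]$ be the characteristic polynomial of $SR_2$ and let $\lambda$ be a root of $C_2(x)$ in $GF(2^{L_2})$. Then the primitive polynomial $P(x)$ such that the characteristic polynomial of the shrunken sequence is $P(x)^N$ is $$P(x)=(x+\lambda^{E})(x+\lambda^{2E})(x+\lambda^{4E})\cdots(x+\lambda^{2^{L_2-1}E}),\qquad E=2^0+2^1+\cdots+2^{L_1-1}=2^{L_1}-1.$$ *)

theory Defs
  imports "HOL-Computational_Algebra.Polynomial" "HOL-Library.Z2" "HOL-Library.Infinite_Set"
begin

text \<open>GF(2) is the type bit. Embedding of GF(2) into any ring (prime subfield).\<close>
definition gf2_emb :: "bit \<Rightarrow> 'a::ring_1" where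
  "gf2_emb c = (if c = 0 then 0 else 1)"

definition satisfies_rec :: "bit poly \<Rightarrow> (nat \<Rightarrow> bit) \<Rightarrow> bool" where
  "satisfies_rec C s \<longleftrightarrow> (\<forall>n. (\<Sum>i\<le>degree C. coeff C i * s (n + i)) = 0)"

text \<open>Primitive polynomial over GF(2): irreducible, monic, and the order of x
  modulo P is 2^(deg P) - 1.\<close>
definition primitive_poly :: "bit poly \<Rightarrow> bool" where
  "primitive_poly P \<longleftrightarrow> irreducible P \<and> lead_coeff P = 1 \<and>
     P dvd (monom 1 (2 ^ degree P - 1) - 1) \<and>
     (\<forall>e. 0 < e \<and> e < 2 ^ degree P - 1 \<longrightarrow> \<not> P dvd (monom 1 e - 1))"

text \<open>Characteristic (= minimal) polynomial of a sequence: the monic polynomial of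
  least degree whose recurrence the sequence satisfies.\<close>
definition char_poly_seq :: "(nat \<Rightarrow> bit) \<Rightarrow> bit poly \<Rightarrow> bool" where
  "char_poly_seq s P \<longleftrightarrow> lead_coeff P = 1 \<and> satisfies_rec P s \<and>
     (\<forall>Q. Q \<noteq> 0 \<and> satisfies_rec Q s \<longrightarrow> degree P \<le> degree Q)"

definition shrunken :: "(nat \<Rightarrow> bit) \<Rightarrow> (nat \<Rightarrow> bit) \<Rightarrow> nat \<Rightarrow> bit" where
  "shrunken a b k = b (enumerate {n. a n = 1} k)"

end

theory Submission
  imports Defs "HOL-Computational_Algebra.Computational_Algebra" "HOL-Computational_Algebra.Field_as_Ring"
    "HOL-Library.FuncSet"
begin

(* Let a be the m-sequence of C1 (period E = 2^L1 - 1), b the m-sequence of C2 (degree L2),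
   lam a root of C2 in GF(2^L2), and s the bits of b taken at the positions where a is 1.

   (1) Balance: a has K = 2^(L1-1) ones per period.  Since the set S of these positions is
       E-periodic, its (k + K m)-th element is its k-th element plus E m, so
       s(k + K m) = b(enum_S k + E m): every K-decimation of s is an E-decimation of b.
   (2) gcd(2^L1 - 1, 2^L2 - 1) = 2^gcd(L1,L2) - 1 = 1, so mu = lam^E again has order
       2^L2 - 1.  Its conjugates mu^(2^i), i < L2, are therefore distinct, and the minimal
       polynomial P of mu over GF(2) is primitive and equals the product of x + mu^(2^i).
   (3) C2 divides P(x^E), so P annihilates every E-decimation of b.  Over GF(2) we have
       P^K = P(x^K) as K is a power of 2, hence P^K annihilates s, and since P is irreducible
       the characteristic polynomial of s is a power of P.

   Linear recurrences are handled through the operator Q(T), T the left shift on sequences. *)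

section \<open>GF(2) as a Euclidean field\<close>

text \<open>Making the type bit a field with gcd turns binary polynomials into a Euclidean ring,
  which provides Bezout identities and unique factorisation for binary polynomials.\<close>

instantiation bit ::
  "{unique_euclidean_ring, normalization_euclidean_semiring, normalization_semidom_multiplicative}"
begin

definition [simp]: "normalize_bit = (normalize_field :: bit \<Rightarrow> _)"
definition [simp]: "unit_factor_bit = (unit_factor_field :: bit \<Rightarrow> _)"
definition [simp]: "euclidean_size_bit = (euclidean_size_field :: bit \<Rightarrow> _)"
definition [simp]: "division_segment (x :: bit) = 1"

instance
  by standard (simp_all add: dvd_field_iff field_split_simps split: if_splits)

end

instantiation bit :: euclidean_ring_gcd
begin

definition gcd_bit :: "bit \<Rightarrow> bit \<Rightarrow> bit" where "gcd_bit = Euclidean_Algorithm.gcd"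
definition lcm_bit :: "bit \<Rightarrow> bit \<Rightarrow> bit" where "lcm_bit = Euclidean_Algorithm.lcm"
definition Gcd_bit :: "bit set \<Rightarrow> bit" where "Gcd_bit = Euclidean_Algorithm.Gcd"
definition Lcm_bit :: "bit set \<Rightarrow> bit" where "Lcm_bit = Euclidean_Algorithm.Lcm"

instance by standard (simp_all add: gcd_bit_def lcm_bit_def Gcd_bit_def Lcm_bit_def)

end

instance bit :: field_gcd ..

lemma UNIV_bit: "(UNIV :: bit set) = {0, 1}"
  by (auto intro: bit.exhaust)

lemma finite_UNIV_bit [simp]: "finite (UNIV :: bit set)"
  by (simp add: UNIV_bit)

lemma card_UNIV_bit: "card (UNIV :: bit set) = 2"
  by (simp add: UNIV_bit)

section \<open>Linear recurrences as shift operators\<close>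

text \<open>poly_shift Q s is the sequence Q(T) s, where T is the left shift; a sequence
  satisfies the recurrence of Q exactly when Q(T) s = 0.  Q \<mapsto> Q(T) is a ring homomorphism
  into the operators, which makes divisibility arguments on recurrences available.\<close>

definition poly_shift :: "'a::comm_ring_1 poly \<Rightarrow> (nat \<Rightarrow> 'a) \<Rightarrow> nat \<Rightarrow> 'a" where
  "poly_shift Q s n = (\<Sum>i\<le>degree Q. coeff Q i * s (n + i))"

lemma satisfies_rec_iff_shift: "satisfies_rec Q s \<longleftrightarrow> (\<forall>n. poly_shift Q s n = 0)"
  by (simp add: satisfies_rec_def poly_shift_def)

lemma poly_shift_bound:
  assumes "degree Q < N"
  shows "poly_shift Q s n = (\<Sum>i<N. coeff Q i * s (n + i))"
proof -
  have "(\<Sum>i<N. coeff Q i * s (n + i)) = (\<Sum>i\<le>degree Q. coeff Q i * s (n + i))"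
    by (rule sum.mono_neutral_right) (use assms in \<open>auto simp: coeff_eq_0\<close>)
  then show ?thesis by (simp add: poly_shift_def)
qed

lemma poly_shift_pCons: "poly_shift (pCons c Q) s n = c * s n + poly_shift Q s (Suc n)"
proof -
  have "degree (pCons c Q) < Suc (Suc (degree Q))" using degree_pCons_le[of c Q] by linarith
  then have "poly_shift (pCons c Q) s n = (\<Sum>i<Suc (Suc (degree Q)). coeff (pCons c Q) i * s (n + i))"
    by (rule poly_shift_bound)
  also have "\<dots> = c * s n + (\<Sum>i<Suc (degree Q). coeff Q i * s (Suc n + i))"
    by (subst sum.lessThan_Suc_shift) simp
  also have "(\<Sum>i<Suc (degree Q). coeff Q i * s (Suc n + i)) = poly_shift Q s (Suc n)"
    by (rule poly_shift_bound[symmetric]) simp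
  finally show ?thesis .
qed

lemma poly_shift_0 [simp]: "poly_shift 0 s n = 0"
  by (simp add: poly_shift_def)

lemma poly_shift_zero_seq [simp]: "poly_shift Q (\<lambda>_. 0) n = 0"
  by (simp add: poly_shift_def)

lemma poly_shift_add: "poly_shift (Q + R) s n = poly_shift Q s n + poly_shift R s n"
proof (induction Q arbitrary: R n)
  case (pCons a p)
  obtain b q where "R = pCons b q" by (cases R)
  then show ?case by (simp add: poly_shift_pCons pCons.IH distrib_right add_ac)
qed simp

lemma poly_shift_smult: "poly_shift (smult c Q) s n = c * poly_shift Q s n"
  by (induction Q arbitrary: n) (simp_all add: poly_shift_pCons algebra_simps)

lemma poly_shift_uminus: "poly_shift (- Q) s n = - poly_shift Q s n"
  by (induction Q arbitrary: n) (simp_all add: poly_shift_pCons)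

lemma poly_shift_diff: "poly_shift (Q - R) s n = poly_shift Q s n - poly_shift R s n"
  by (simp only: diff_conv_add_uminus poly_shift_add poly_shift_uminus)

lemma poly_shift_mult: "poly_shift (Q * R) s n = poly_shift Q (poly_shift R s) n"
proof (induction Q arbitrary: n)
  case (pCons a p)
  have "poly_shift (pCons a p * R) s n = a * poly_shift R s n + poly_shift (pCons 0 (p * R)) s n"
    by (simp add: poly_shift_add poly_shift_smult)
  then show ?case using pCons.IH by (simp add: poly_shift_pCons)
qed simp

lemma poly_shift_const: "poly_shift [:c:] s n = c * s n"
  by (simp add: poly_shift_pCons)

lemma poly_shift_one: "poly_shift 1 s n = s n"
  by (simp add: one_pCons poly_shift_pCons)

lemma poly_shift_monom: "poly_shift (monom 1 d) s n = s (n + d)"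
  by (induction d arbitrary: n) (simp_all add: monom_0 monom_Suc poly_shift_const poly_shift_pCons)

lemma poly_shift_pcompose_monom:
  "poly_shift (pcompose Q (monom 1 d)) s (r + d * n) = poly_shift Q (\<lambda>m. s (r + d * m)) n"
proof (induction Q arbitrary: n)
  case (pCons a p)
  have "poly_shift (pcompose (pCons a p) (monom 1 d)) s (r + d * n)
      = a * s (r + d * n) + poly_shift (pcompose p (monom 1 d)) s (r + d * n + d)"
    by (simp add: pcompose_pCons poly_shift_add poly_shift_const poly_shift_mult poly_shift_monom)
  also have "poly_shift (pcompose p (monom 1 d)) s (r + d * n + d)
      = poly_shift p (\<lambda>m. s (r + d * m)) (Suc n)"
    using pCons.IH[of "Suc n"] by (simp add: algebra_simps)
  finally show ?case by (simp add: poly_shift_pCons)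
qed (simp add: poly_shift_def)

section \<open>Annihilating polynomials and the characteristic polynomial\<close>

lemma satisfies_rec_dvd:
  assumes "satisfies_rec R s" "R dvd Q"
  shows "satisfies_rec Q s"
proof -
  obtain T where "Q = T * R" using assms(2) by (auto simp: dvd_def mult.commute)
  moreover have "poly_shift R s = (\<lambda>_. 0)" using assms(1) by (auto simp: satisfies_rec_iff_shift)
  ultimately show ?thesis by (simp add: satisfies_rec_iff_shift poly_shift_mult)
qed

lemma satisfies_rec_coprime_cancel:
  assumes "coprime A Q" "satisfies_rec (A * B) s" "satisfies_rec Q s"
  shows "satisfies_rec B s"
proof -
  define u where "u = fst (bezout_coefficients A Q)"
  define v where "v = snd (bezout_coefficients A Q)"
  have "u * A + v * Q = 1"
    using bezout_coefficients_fst_snd[of A Q] assms(1) by (simp add: u_def v_def)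
  then have B: "B = u * (A * B) + (v * B) * Q"
    by (metis (no_types, lifting) distrib_right mult.assoc mult.commute mult_1)
  have AB: "poly_shift (A * B) s = (\<lambda>_. 0)" and Q: "poly_shift Q s = (\<lambda>_. 0)"
    using assms(2,3) by (auto simp: satisfies_rec_iff_shift)
  have "poly_shift B s n = 0" for n
    by (subst B) (simp only: poly_shift_add poly_shift_mult AB Q poly_shift_zero_seq add_0)
  then show ?thesis by (simp add: satisfies_rec_iff_shift)
qed

lemma satisfies_rec_one_imp_zero: "satisfies_rec 1 s \<Longrightarrow> s = (\<lambda>_. 0)"
  by (auto simp: satisfies_rec_iff_shift poly_shift_one)

text \<open>If P irreducible and P^K annihilates s, then every annihilator Q of s has degree at
  least that of some annihilating power P^j: the P-free part of Q is useless.\<close>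
lemma irreducible_power_annihilator_bound:
  assumes "irreducible P"
  shows "Q \<noteq> 0 \<Longrightarrow> satisfies_rec Q s \<Longrightarrow> satisfies_rec (P ^ K) s \<Longrightarrow>
    \<exists>j. satisfies_rec (P ^ j) s \<and> j * degree P \<le> degree Q"
proof (induction K arbitrary: Q s)
  case 0
  then show ?case by (intro exI[of _ 0]) auto
next
  case (Suc K)
  show ?case
  proof (cases "P dvd Q")
    case True
    then obtain Q' where Q: "Q = P * Q'" by (auto simp: dvd_def)
    have Q0: "Q' \<noteq> 0" "P \<noteq> 0" using Suc.prems Q by auto
    have "satisfies_rec Q' (poly_shift P s)" using Suc.prems(2) unfolding Q satisfies_rec_iff_shift
      by (simp add: poly_shift_mult mult.commute[of P])
    moreover have "satisfies_rec (P ^ K) (poly_shift P s)"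
      using Suc.prems(3) unfolding satisfies_rec_iff_shift power_Suc2 poly_shift_mult .
    ultimately obtain j where j: "satisfies_rec (P ^ j) (poly_shift P s)" "j * degree P \<le> degree Q'"
      using Suc.IH[OF Q0(1)] by blast
    have "satisfies_rec (P ^ Suc j) s" using j(1) unfolding satisfies_rec_iff_shift
      by (simp add: poly_shift_mult mult.commute[of P])
    moreover have "degree Q = degree P + degree Q'" using Q Q0 by (simp add: degree_mult_eq)
    ultimately show ?thesis using j(2) by (intro exI[of _ "Suc j"]) simp
  next
    case False
    then have "coprime P Q"
      using assms by (simp add: prime_elem_imp_coprime prime_elem_iff_irreducible)
    then have "satisfies_rec (P ^ K) s"
      using satisfies_rec_coprime_cancel[of P Q "P ^ K" s] Suc.prems by simp
    then show ?thesis using Suc.IH[OF Suc.prems(1,2)] by blast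
  qed
qed

lemma char_poly_seq_power:
  assumes "irreducible P" "lead_coeff P = 1" "satisfies_rec (P ^ K) s"
  shows "\<exists>N. char_poly_seq s (P ^ N)"
proof -
  define N where "N = (LEAST N. satisfies_rec (P ^ N) s)"
  have sN: "satisfies_rec (P ^ N) s" unfolding N_def by (rule LeastI[of _ K]) (rule assms(3))
  have "P \<noteq> 0" using assms(1) unfolding irreducible_def by blast
  have "degree (P ^ N) \<le> degree Q" if Q: "Q \<noteq> 0" "satisfies_rec Q s" for Q
  proof -
    obtain j where j: "satisfies_rec (P ^ j) s" "j * degree P \<le> degree Q"
      using irreducible_power_annihilator_bound[OF assms(1) Q assms(3)] by blast
    have "N \<le> j" unfolding N_def by (rule Least_le) (rule j(1))
    then have "N * degree P \<le> j * degree P" by simp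
    moreover have "degree (P ^ N) = N * degree P" by (rule degree_power_eq) (rule \<open>P \<noteq> 0\<close>)
    ultimately show ?thesis using j(2) by linarith
  qed
  moreover have "lead_coeff (P ^ N) = 1" by (simp only: lead_coeff_power assms(2) power_one)
  ultimately show ?thesis using sN unfolding char_poly_seq_def by blast
qed

lemma satisfies_rec_step:
  assumes "satisfies_rec C x" "lead_coeff C = 1" "degree C = L"
  shows "x (n + L) = (\<Sum>i<L. coeff C i * x (n + i))"
proof -
  have "(\<Sum>i<Suc L. coeff C i * x (n + i)) = 0"
    using assms(1,3) unfolding satisfies_rec_def lessThan_Suc_atMost by blast
  then have "(\<Sum>i<L. coeff C i * x (n + i)) + x (n + L) = 0"
    using assms(2,3) by simp
  moreover have "- (y::bit) = y" for y by simp
  ultimately show ?thesis by (metis add_eq_0_iff2)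
qed

lemma satisfies_rec_determined:
  assumes "satisfies_rec C x" "satisfies_rec C y" "lead_coeff C = 1" "degree C = L"
    "\<forall>k<L. x (i + k) = y (j + k)"
  shows "x (i + m) = y (j + m)"
proof (induction m rule: less_induct)
  case (less m)
  show ?case
  proof (cases "m < L")
    case True then show ?thesis using assms(5) by blast
  next
    case False
    define q where "q = m - L"
    have m: "m = q + L" using False q_def by simp
    have "x (i + m) = x ((i + q) + L)" by (simp add: m add.assoc)
    also have "\<dots> = (\<Sum>k<L. coeff C k * x (i + q + k))" by (rule satisfies_rec_step[OF assms(1,3,4)])
    also have "\<dots> = (\<Sum>k<L. coeff C k * y (j + q + k))"
    proof (rule sum.cong[OF refl])
      fix k assume "k \<in> {..<L}"
      then have "x (i + (q + k)) = y (j + (q + k))" using m by (intro less.IH) simp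
      then show "coeff C k * x (i + q + k) = coeff C k * y (j + q + k)" by (simp add: add.assoc)
    qed
    also have "\<dots> = y ((j + q) + L)" by (rule satisfies_rec_step[OF assms(2,3,4), symmetric])
    also have "\<dots> = y (j + m)" by (simp add: m add.assoc)
    finally show ?thesis .
  qed
qed


section \<open>Primitive polynomials and m-sequences\<close>

lemma two_power_minus_one_pos: "L \<ge> 1 \<Longrightarrow> (1::nat) \<le> 2 ^ L - 1"
proof -
  assume "L \<ge> 1"
  then have "(2::nat) ^ 1 \<le> 2 ^ L" by (intro power_increasing) auto
  then show ?thesis by simp
qed

lemma primitive_poly_basics:
  assumes "primitive_poly C" "degree C = L"
  shows "L \<ge> 1" "irreducible C" "lead_coeff C = 1" "C dvd (monom 1 (2 ^ L - 1) - 1)"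
proof -
  show irr: "irreducible C" and "lead_coeff C = 1" and "C dvd (monom 1 (2 ^ L - 1) - 1)"
    using assms unfolding primitive_poly_def by blast+
  have "C \<noteq> 0" "\<not> is_unit C" using irr irreducible_not_unit unfolding irreducible_def by blast+
  then show "L \<ge> 1" using assms(2) is_unit_iff_degree by fastforce
qed

text \<open>A primitive C is coprime to x (it divides x^(2^L-1) - 1) and to x^e - 1 for 0 < e < 2^L - 1;
  these coprimalities rule out degenerate recurrences below.\<close>
lemma primitive_poly_coprime_x_power:
  assumes "primitive_poly C" "degree C = L"
  shows "coprime C (monom 1 i)"
proof -
  note C = primitive_poly_basics[OF assms]
  have pe: "prime_elem C" using C(2) by (simp add: prime_elem_iff_irreducible)
  have "\<not> C dvd monom 1 1"
  proof
    assume "C dvd monom 1 1"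
    then have "C dvd monom 1 (2 ^ L - 1 - 1) * monom 1 1" by simp
    moreover have "monom 1 (2 ^ L - 1 - 1) * monom (1::bit) 1 = monom 1 (2 ^ L - 1)"
    proof -
      have "(2 ^ L - 1 - 1) + 1 = (2::nat) ^ L - 1" using two_power_minus_one_pos[OF C(1)] by linarith
      then show ?thesis by (simp only: mult_monom mult_1)
    qed
    ultimately have "C dvd monom 1 (2 ^ L - 1) - (monom 1 (2 ^ L - 1) - 1)"
      using C(4) by (metis dvd_diff)
    then have "is_unit C" by simp
    then show False using C(2) irreducible_not_unit by blast
  qed
  then have "coprime C (monom 1 1 ^ i)" using pe by (simp add: prime_elem_imp_coprime)
  then show ?thesis by (simp add: monom_power)
qed

lemma primitive_poly_coprime_x_power_minus_one:
  assumes "primitive_poly C" "degree C = L" "0 < e" "e < 2 ^ L - 1"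
  shows "coprime C (monom 1 e - 1)"
proof -
  have "\<not> C dvd (monom 1 e - 1)" using assms unfolding primitive_poly_def by blast
  moreover have "prime_elem C" using assms(1) by (simp add: primitive_poly_def prime_elem_iff_irreducible)
  ultimately show ?thesis using prime_elem_imp_coprime by blast
qed

lemma mseq_period:
  assumes "primitive_poly C" "degree C = L" "satisfies_rec C a"
  shows "a (n + (2 ^ L - 1)) = a n"
proof -
  have "satisfies_rec (monom 1 (2 ^ L - 1) - 1) a"
    using satisfies_rec_dvd[OF assms(3) primitive_poly_basics(4)[OF assms(1,2)]] .
  then have "poly_shift (monom 1 (2 ^ L - 1) - 1) a n = 0" by (simp add: satisfies_rec_iff_shift)
  then show ?thesis by (simp only: poly_shift_diff poly_shift_monom poly_shift_one right_minus_eq)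
qed

lemma mseq_nonzero_window:
  assumes "primitive_poly C" "degree C = L" "satisfies_rec C a" "a \<noteq> (\<lambda>_. 0)"
  shows "\<exists>k<L. a (n + k) \<noteq> 0"
proof (rule ccontr)
  assume "\<not> ?thesis"
  then have "a (n + m) = (\<lambda>_. 0::bit) (0 + m)" for m
    using satisfies_rec_determined[where y="\<lambda>_. 0" and j=0, OF assms(3) _
        primitive_poly_basics(3)[OF assms(1,2)] assms(2)]
    by (simp add: satisfies_rec_def)
  then have "satisfies_rec (monom 1 n * 1) a"
    unfolding satisfies_rec_iff_shift by (simp add: poly_shift_monom add.commute[of _ n])
  then have "satisfies_rec 1 a"
    using satisfies_rec_coprime_cancel[of "monom 1 n" C 1 a] assms(3)
      primitive_poly_coprime_x_power[OF assms(1,2), of n] by (simp add: coprime_commute)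
  then show False using satisfies_rec_one_imp_zero assms(4) by blast
qed

lemma mseq_windows_distinct:
  assumes "primitive_poly C" "degree C = L" "satisfies_rec C a" "a \<noteq> (\<lambda>_. 0)"
    "i < j" "j < 2 ^ L - 1" "\<forall>k<L. a (i + k) = a (j + k)"
  shows False
proof -
  define d where "d = j - i"
  have d: "0 < d" "d < 2 ^ L - 1" using assms(5,6) by (auto simp: d_def)
  have shift: "a (i + m) = a (j + m)" for m
    by (rule satisfies_rec_determined[OF assms(3) assms(3) primitive_poly_basics(3)[OF assms(1,2)]
        assms(2) assms(7)])
  have "poly_shift ((monom 1 d - 1) * monom 1 i) a m = 0" for m
  proof -
    have "poly_shift ((monom 1 d - 1) * monom 1 i) a m = a (m + d + i) - a (m + i)"
      by (simp only: poly_shift_mult poly_shift_diff poly_shift_monom poly_shift_one)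
    also have "a (m + d + i) = a (m + i)"
      using shift[of m] assms(5) by (simp add: d_def add_ac)
    finally show ?thesis by simp
  qed
  then have "satisfies_rec (((monom 1 d - 1) * monom 1 i) * 1) a"
    by (simp add: satisfies_rec_iff_shift)
  moreover have "coprime ((monom 1 d - 1) * monom 1 i) C"
    using primitive_poly_coprime_x_power_minus_one[OF assms(1,2) d]
      primitive_poly_coprime_x_power[OF assms(1,2)] by (simp add: coprime_commute)
  ultimately have "satisfies_rec 1 a" using satisfies_rec_coprime_cancel assms(3) by blast
  then show False using satisfies_rec_one_imp_zero assms(4) by blast
qed

definition window :: "nat \<Rightarrow> (nat \<Rightarrow> bit) \<Rightarrow> nat \<Rightarrow> nat \<Rightarrow> bit" where
  "window L a n = (\<lambda>k\<in>{..<L}. a (n + k))"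

abbreviation bit_tuples :: "nat \<Rightarrow> (nat \<Rightarrow> bit) set" where
  "bit_tuples L \<equiv> PiE {..<L} (\<lambda>_. UNIV)"

text \<open>Over one period the windows of an m-sequence run through all nonzero L-tuples exactly
  once: they are distinct and nonzero, and there are just 2^L - 1 of the latter.\<close>
lemma mseq_windows_bij:
  assumes "primitive_poly C" "degree C = L" "satisfies_rec C a" "a \<noteq> (\<lambda>_. 0)"
  shows "bij_betw (window L a) {..<2 ^ L - 1} (bit_tuples L - {\<lambda>k\<in>{..<L}. 0})"
proof -
  have window_eq: "\<forall>k<L. a (i + k) = a (j + k)" if "window L a i = window L a j" for i j
  proof (intro allI impI)
    fix k assume "k < L"
    then show "a (i + k) = a (j + k)"
      using fun_cong[OF that, of k] by (simp add: window_def)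
  qed
  have inj: "inj_on (window L a) {..<2 ^ L - 1}"
  proof (rule inj_onI)
    fix i j assume ij: "i \<in> {..<2 ^ L - 1}" "j \<in> {..<2 ^ L - 1}" "window L a i = window L a j"
    show "i = j"
    proof (rule linorder_cases[of i j])
      assume "i < j"
      then show ?thesis using mseq_windows_distinct[OF assms _ _ window_eq[OF ij(3)]] ij(2) by simp
    next
      assume "j < i"
      then show ?thesis
        using mseq_windows_distinct[OF assms _ _ window_eq[OF ij(3)[symmetric]]] ij(1) by simp
    qed
  qed
  have "window L a n \<noteq> (\<lambda>k\<in>{..<L}. 0)" for n
  proof
    assume zero: "window L a n = (\<lambda>k\<in>{..<L}. 0)"
    have "a (n + k) = 0" if "k < L" for k
      using fun_cong[OF zero, of k] that by (simp add: window_def)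
    then show False using mseq_nonzero_window[OF assms, of n] by blast
  qed
  moreover have "window L a n \<in> bit_tuples L" for n
    unfolding window_def by (rule restrict_PiE_iff[THEN iffD2]) simp
  ultimately have sub: "window L a ` {..<2 ^ L - 1} \<subseteq> bit_tuples L - {\<lambda>k\<in>{..<L}. 0}"
    by (simp add: image_subset_iff)
  have fin: "finite (bit_tuples L)" by (simp add: finite_PiE)
  have "(\<lambda>k\<in>{..<L}. 0::bit) \<in> bit_tuples L" by (rule restrict_PiE_iff[THEN iffD2]) simp
  moreover have "card (bit_tuples L) = 2 ^ L" by (simp add: card_PiE card_UNIV_bit)
  ultimately have "card (bit_tuples L - {\<lambda>k\<in>{..<L}. 0}) = card (window L a ` {..<2 ^ L - 1})"
    using fin card_image[OF inj] by (simp add: card_Diff_singleton)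
  then have "window L a ` {..<2 ^ L - 1} = bit_tuples L - {\<lambda>k\<in>{..<L}. 0}"
    using fin by (intro card_subset_eq sub) simp_all
  with inj show ?thesis by (simp add: bij_betw_def)
qed

lemma card_bit_tuples_leading_one:
  assumes "L \<ge> 1"
  shows "card {f \<in> bit_tuples L. f 0 = 1} = 2 ^ (L - 1)"
proof -
  have "{f \<in> bit_tuples L. f 0 = 1} = PiE {..<L} (\<lambda>k. if k = 0 then {1} else UNIV)"
  proof (rule set_eqI)
    fix f :: "nat \<Rightarrow> bit"
    have "(\<forall>k\<in>{..<L}. f k \<in> (if k = 0 then {1} else UNIV)) \<longleftrightarrow> f 0 = 1"
      using assms by auto
    then show "f \<in> {f \<in> bit_tuples L. f 0 = 1} \<longleftrightarrow> f \<in> PiE {..<L} (\<lambda>k. if k = 0 then {1} else UNIV)"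
      by (auto simp: PiE_iff)
  qed
  also have "card \<dots> = (\<Prod>k<L. card (if k = 0 then {1::bit} else UNIV))"
    by (rule card_PiE) simp
  also have "\<dots> = 2 ^ (L - 1)"
  proof -
    obtain L' where L': "L = Suc L'" using assms by (cases L) auto
    show ?thesis unfolding L' prod.lessThan_Suc_shift by (simp add: card_UNIV_bit)
  qed
  finally show ?thesis .
qed

lemma mseq_count_ones:
  assumes "primitive_poly C" "degree C = L" "satisfies_rec C a" "a \<noteq> (\<lambda>_. 0)"
  shows "card {n. n < 2 ^ L - 1 \<and> a n = 1} = 2 ^ (L - 1)"
proof -
  have L: "L \<ge> 1" using primitive_poly_basics(1)[OF assms(1,2)] .
  note bij = mseq_windows_bij[OF assms]
  have first: "window L a n 0 = a n" for n using L by (simp add: window_def)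
  have "window L a ` {n. n < 2 ^ L - 1 \<and> a n = 1} = {f \<in> window L a ` {..<2 ^ L - 1}. f 0 = 1}"
    by (auto simp: first)
  also have "\<dots> = {f \<in> bit_tuples L - {\<lambda>k\<in>{..<L}. 0}. f 0 = 1}"
    by (simp only: bij_betw_imp_surj_on[OF bij])
  also have "\<dots> = {f \<in> bit_tuples L. f 0 = 1}"
  proof -
    have "(\<lambda>k\<in>{..<L}. (0::bit)) 0 \<noteq> 1" using L by simp
    then show ?thesis by blast
  qed
  finally have img: "window L a ` {n. n < 2 ^ L - 1 \<and> a n = 1} = {f \<in> bit_tuples L. f 0 = 1}" .
  have "inj_on (window L a) {n. n < 2 ^ L - 1 \<and> a n = 1}"
    by (rule inj_on_subset[OF bij_betw_imp_inj_on[OF bij]]) auto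
  then have "card {n. n < 2 ^ L - 1 \<and> a n = 1} = card {f \<in> bit_tuples L. f 0 = 1}"
    by (simp flip: img add: card_image)
  then show ?thesis using card_bit_tuples_leading_one[OF L] by simp
qed


section \<open>Enumerating a periodic set of positions\<close>

lemma card_less_enumerate:
  assumes "infinite (S :: nat set)"
  shows "card {m \<in> S. m < enumerate S n} = n"
proof -
  have "{m \<in> S. m < enumerate S n} = enumerate S ` {..<n}"
  proof
    show "{m \<in> S. m < enumerate S n} \<subseteq> enumerate S ` {..<n}"
    proof
      fix m assume m: "m \<in> {m \<in> S. m < enumerate S n}"
      then obtain j where j: "enumerate S j = m" using enumerate_Ex[OF assms] by blast
      then have "j < n" using m assms by auto
      then show "m \<in> enumerate S ` {..<n}" using j by auto
    qed
    show "enumerate S ` {..<n} \<subseteq> {m \<in> S. m < enumerate S n}"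
      using assms enumerate_in_set enumerate_mono by auto
  qed
  moreover have "inj_on (enumerate S) {..<n}"
    using inj_enumerate[OF assms] by (simp add: inj_on_def)
  ultimately show ?thesis by (simp add: card_image)
qed

lemma enumerate_periodic_step:
  assumes "infinite (S :: nat set)" "\<And>n. n \<in> S \<longleftrightarrow> n + E \<in> S" "card {m \<in> S. m < E} = K"
  shows "enumerate S (k + K) = enumerate S k + E"
proof -
  define q where "q = enumerate S k + E"
  have "q \<in> S" using assms(2) enumerate_in_set[OF assms(1)] by (simp add: q_def)
  then obtain j where j: "enumerate S j = q" using enumerate_Ex[OF assms(1)] by blast
  have split: "{m \<in> S. m < q} = {m \<in> S. m < E} \<union> (\<lambda>m. m + E) ` {m \<in> S. m < enumerate S k}"
  proof (rule set_eqI)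
    fix m
    show "m \<in> {m \<in> S. m < q} \<longleftrightarrow> m \<in> {m \<in> S. m < E} \<union> (\<lambda>m. m + E) ` {m \<in> S. m < enumerate S k}"
    proof (cases "m < E")
      case True then show ?thesis by (auto simp: q_def)
    next
      case False
      then have m: "m = (m - E) + E" by simp
      have "m \<in> S \<longleftrightarrow> m - E \<in> S" using assms(2)[of "m - E"] m by simp
      then show ?thesis using False m by (auto simp: q_def image_iff intro!: bexI[of _ "m - E"])
    qed
  qed
  have "card ((\<lambda>m. m + E) ` {m \<in> S. m < enumerate S k}) = k"
    by (subst card_image) (auto simp: inj_on_def card_less_enumerate[OF assms(1)])
  then have "card {m \<in> S. m < q} = K + k"
    unfolding split using assms(3) by (subst card_Un_disjoint) auto
  moreover have "card {m \<in> S. m < q} = j" using card_less_enumerate[OF assms(1), of j] j by simp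
  ultimately show ?thesis using j q_def by (simp add: add.commute)
qed

lemma enumerate_periodic:
  assumes "infinite (S :: nat set)" "\<And>n. n \<in> S \<longleftrightarrow> n + E \<in> S" "card {m \<in> S. m < E} = K"
  shows "enumerate S (k + K * m) = enumerate S k + E * m"
proof (induction m)
  case (Suc m)
  have "enumerate S (k + K * Suc m) = enumerate S ((k + K * m) + K)" by (simp add: algebra_simps)
  also have "\<dots> = enumerate S k + E * Suc m"
    by (simp only: enumerate_periodic_step[OF assms] Suc.IH) (simp add: algebra_simps)
  finally show ?case .
qed simp

lemma shrunken_decimation:
  assumes per: "\<And>n. a (n + E) = a n" and ones: "card {n. n < E \<and> a n = 1} = K" and "0 < K"
  shows "shrunken a b (k + K * m) = b (enumerate {n. a n = 1} k + E * m)"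
proof -
  define S where "S = {n. a n = 1}"
  have periodic: "n \<in> S \<longleftrightarrow> n + E \<in> S" for n unfolding S_def using per[of n] by simp
  have cnt: "card {m \<in> S. m < E} = K"
    using ones unfolding S_def by (simp add: conj_commute)
  then obtain n0 where n0: "n0 \<in> S" "n0 < E"
    using \<open>0 < K\<close> by (metis (no_types, lifting) card.empty empty_Collect_eq less_irrefl)
  have "n0 + E * j \<in> S" for j
  proof (induction j)
    case (Suc j)
    then show ?case using periodic[of "n0 + E * j"] by (simp add: algebra_simps)
  qed (simp add: n0)
  moreover have "j \<le> n0 + E * j" for j
  proof -
    have "1 * j \<le> E * j" using n0(2) by (intro mult_le_mono1) simp
    then show ?thesis unfolding mult_1 by (rule trans_le_add2)
  qed
  ultimately have "infinite S"
    unfolding infinite_nat_iff_unbounded_le by blast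
  then have "enumerate S (k + K * m) = enumerate S k + E * m"
    using enumerate_periodic periodic cnt by blast
  then show ?thesis unfolding shrunken_def S_def by simp
qed

section \<open>Decimations of sequences over GF(2)\<close>

text \<open>Over GF(2) squaring is additive, so Q(x)^(2^t) = Q(x^(2^t)).\<close>
lemma bit_poly_square_pcompose: "(Q::bit poly) ^ 2 = pcompose Q (monom 1 2)"
proof (induction Q)
  case (pCons c Q)
  have two: "(2::bit poly) = 0" by (simp add: numeral_poly)
  have "(pCons c Q) ^ 2 = ([:c:] + monom 1 1 * Q) ^ 2"
    by (simp add: monom_Suc monom_0)
  also have "\<dots> = [:c * c:] + (monom 1 1 * monom 1 1) * Q ^ 2 + 2 * ([:c:] * (monom 1 1 * Q))"
    by (simp add: power2_eq_square algebra_simps)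
  also have "\<dots> = [:c:] + monom 1 2 * Q ^ 2"
    by (simp add: two mult_monom numeral_2_eq_2)
  also have "\<dots> = pcompose (pCons c Q) (monom 1 2)"
    by (simp add: pcompose_pCons pCons.IH)
  finally show ?case .
qed simp

lemma pcompose_x_power: "pcompose (monom 1 k) q = q ^ k"
  by (induction k) (simp_all add: monom_0 monom_Suc pcompose_pCons)

lemma bit_poly_power2_pcompose: "(Q::bit poly) ^ (2 ^ t) = pcompose Q (monom 1 (2 ^ t))"
proof (induction t)
  case 0
  show ?case by (simp add: monom_Suc monom_0 pcompose_idR)
next
  case (Suc t)
  have "Q ^ (2 ^ Suc t) = (Q ^ (2 ^ t)) ^ 2" by (simp only: power_Suc2 power_mult)
  also have "\<dots> = pcompose Q (pcompose (monom 1 (2 ^ t)) (monom 1 2))"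
    by (simp only: bit_poly_square_pcompose Suc.IH pcompose_assoc)
  also have "pcompose (monom 1 (2 ^ t)) (monom (1::bit) 2) = monom 1 (2 ^ Suc t)"
    by (simp add: pcompose_x_power monom_power mult.commute)
  finally show ?case .
qed

lemma decimation_annihilator:
  fixes s b :: "nat \<Rightarrow> bit"
  assumes "satisfies_rec (pcompose P (monom 1 E)) b" "\<And>k m. s (k + 2 ^ t * m) = b (g k + E * m)"
  shows "satisfies_rec (P ^ (2 ^ t)) s"
proof -
  have "poly_shift (P ^ (2 ^ t)) s k = 0" for k
  proof -
    have "poly_shift (P ^ (2 ^ t)) s k = poly_shift (pcompose P (monom 1 (2 ^ t))) s (k + 2 ^ t * 0)"
      by (simp add: bit_poly_power2_pcompose)
    also have "\<dots> = poly_shift P (\<lambda>m. b (g k + E * m)) 0"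
      by (simp only: poly_shift_pcompose_monom assms(2))
    also have "\<dots> = poly_shift (pcompose P (monom 1 E)) b (g k + E * 0)"
      by (rule poly_shift_pcompose_monom[symmetric])
    also have "\<dots> = 0" using assms(1) by (simp only: satisfies_rec_iff_shift)
    finally show ?thesis .
  qed
  then show ?thesis by (simp add: satisfies_rec_iff_shift)
qed

section \<open>Mersenne numbers\<close>

lemma gcd_mersenne_step:
  assumes "b \<le> a"
  shows "gcd (2 ^ a - 1 :: nat) (2 ^ b - 1) = gcd (2 ^ (a - b) - 1) (2 ^ b - 1)"
proof -
  obtain x where x: "2 ^ (a - b) = Suc x" using not0_implies_Suc[of "2 ^ (a - b) :: nat"] by auto
  obtain y where y: "2 ^ b = Suc y" using not0_implies_Suc[of "2 ^ b :: nat"] by auto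
  have "(2::nat) ^ a = 2 ^ (a - b) * 2 ^ b" using assms by (simp add: power_add[symmetric])
  then have "(2::nat) ^ a - 1 = (2 ^ (a - b) - 1) + 2 ^ (a - b) * (2 ^ b - 1)"
    using x y by simp
  then show ?thesis by (metis gcd_add_mult gcd.commute add.commute)
qed

text \<open>gcd(2^a - 1, 2^b - 1) = 2^gcd(a,b) - 1, by the Euclidean algorithm on exponents.\<close>
lemma gcd_mersenne: "gcd (2 ^ a - 1 :: nat) (2 ^ b - 1) = 2 ^ gcd a b - 1"
proof (induction "a + b" arbitrary: a b rule: less_induct)
  case less
  show ?case
  proof (cases "a = 0 \<or> b = 0")
    case True then show ?thesis by auto
  next
    case False
    show ?thesis
    proof (cases "b \<le> a")
      case True
      have "gcd (2 ^ a - 1 :: nat) (2 ^ b - 1) = gcd (2 ^ (a - b) - 1) (2 ^ b - 1)"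
        by (rule gcd_mersenne_step[OF True])
      also have "\<dots> = 2 ^ gcd (a - b) b - 1" using less.hyps[of "a - b" b] False by simp
      also have "gcd (a - b) b = gcd a b" using True by (rule gcd_diff1_nat)
      finally show ?thesis .
    next
      case b: False
      have "gcd (2 ^ a - 1 :: nat) (2 ^ b - 1) = gcd (2 ^ (b - a) - 1) (2 ^ a - 1)"
        using gcd_mersenne_step[of a b] b by (simp add: gcd.commute)
      also have "\<dots> = 2 ^ gcd (b - a) a - 1" using less.hyps[of "b - a" a] False b by simp
      also have "gcd (b - a) a = gcd a b" using b gcd_diff1_nat[of a b] by (simp add: gcd.commute)
      finally show ?thesis .
    qed
  qed
qed

lemma coprime_mersenne: "coprime m n \<Longrightarrow> coprime (2 ^ m - 1 :: nat) (2 ^ n - 1)"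
  using gcd_mersenne[of m n] by (simp add: coprime_iff_gcd_eq_1)


section \<open>Fields of characteristic 2 and the embedding of GF(2)\<close>

lemma gf2_emb_0 [simp]: "gf2_emb 0 = 0" and gf2_emb_1 [simp]: "gf2_emb 1 = 1"
  by (simp_all add: gf2_emb_def)

lemma char2_uminus:
  assumes "(1::'f::comm_ring_1) + 1 = 0"
  shows "- (x::'f) = x"
proof -
  have "x + x = (1 + 1) * x" by (simp only: distrib_right mult_1)
  also have "\<dots> = 0" by (simp only: assms mult_zero_left)
  finally show ?thesis by (rule minus_unique)
qed

lemma gf2_emb_add:
  assumes "(1::'f::comm_ring_1) + 1 = 0"
  shows "(gf2_emb (x + y) :: 'f) = gf2_emb x + gf2_emb y"
  using assms by (cases x; cases y) simp_all

lemma gf2_emb_diff: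
  assumes "(1::'f::comm_ring_1) + 1 = 0"
  shows "(gf2_emb (x - y) :: 'f) = gf2_emb x - gf2_emb y"
proof -
  have "- (1::'f) = 1" by (rule char2_uminus[OF assms])
  then show ?thesis by (cases x; cases y) simp_all
qed

lemma gf2_emb_mult: "(gf2_emb (x * y) :: 'f::comm_ring_1) = gf2_emb x * gf2_emb y"
  by (cases x; cases y) simp_all

lemma coeff_map_gf2: "coeff (map_poly (gf2_emb :: bit \<Rightarrow> 'f::comm_ring_1) p) n = gf2_emb (coeff p n)"
  by (simp add: coeff_map_poly)

lemma map_gf2_add:
  assumes "(1::'f::comm_ring_1) + 1 = 0"
  shows "map_poly (gf2_emb :: bit \<Rightarrow> 'f) (p + q) = map_poly gf2_emb p + map_poly gf2_emb q"
  by (rule poly_eqI) (simp only: coeff_map_gf2 coeff_add gf2_emb_add[OF assms])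

lemma map_gf2_diff:
  assumes "(1::'f::comm_ring_1) + 1 = 0"
  shows "map_poly (gf2_emb :: bit \<Rightarrow> 'f) (p - q) = map_poly gf2_emb p - map_poly gf2_emb q"
  by (rule poly_eqI) (simp only: coeff_map_gf2 coeff_diff gf2_emb_diff[OF assms])

lemma map_gf2_pCons:
  "map_poly (gf2_emb :: bit \<Rightarrow> 'f::comm_ring_1) (pCons c p) = pCons (gf2_emb c) (map_poly gf2_emb p)"
  by (rule poly_eqI) (simp add: coeff_map_gf2 coeff_pCons split: nat.splits)

lemma map_gf2_mult:
  assumes "(1::'f::comm_ring_1) + 1 = 0"
  shows "map_poly (gf2_emb :: bit \<Rightarrow> 'f) (p * q) = map_poly gf2_emb p * map_poly gf2_emb q"
proof (induction p)
  case (pCons a p)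
  have "map_poly (gf2_emb :: bit \<Rightarrow> 'f) (smult a q) = smult (gf2_emb a) (map_poly gf2_emb q)"
    by (rule poly_eqI) (simp add: coeff_map_gf2 gf2_emb_mult)
  then show ?case by (simp add: map_gf2_add[OF assms] map_gf2_pCons pCons.IH)
qed simp

lemma map_gf2_pcompose:
  assumes "(1::'f::comm_ring_1) + 1 = 0"
  shows "map_poly (gf2_emb :: bit \<Rightarrow> 'f) (pcompose p q) = pcompose (map_poly gf2_emb p) (map_poly gf2_emb q)"
proof (induction p)
  case (pCons a p)
  have "map_poly (gf2_emb :: bit \<Rightarrow> 'f) [:a:] = [:gf2_emb a:]" by (simp add: map_gf2_pCons)
  then show ?case
    by (simp add: pcompose_pCons map_gf2_add[OF assms] map_gf2_mult[OF assms] map_gf2_pCons pCons.IH)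
qed simp

lemma poly_map_gf2_square:
  assumes "(1::'f::comm_ring_1) + 1 = 0"
  shows "poly (map_poly (gf2_emb :: bit \<Rightarrow> 'f) p) (z ^ 2) = (poly (map_poly gf2_emb p) z) ^ 2"
proof (induction p)
  case (pCons a p)
  have two: "(2::'f) * w = 0" for w using assms by (metis mult_2 distrib_right mult_1 mult_zero_left)
  have sq: "(gf2_emb a :: 'f) ^ 2 = gf2_emb a" by (cases a) simp_all
  have "(gf2_emb a + z * poly (map_poly gf2_emb p) z) ^ 2
      = (gf2_emb a :: 'f) ^ 2 + z ^ 2 * poly (map_poly gf2_emb p) z ^ 2
        + 2 * (gf2_emb a * z * poly (map_poly gf2_emb p) z)"
    by (simp add: power2_eq_square algebra_simps)
  also have "\<dots> = gf2_emb a + z ^ 2 * poly (map_poly gf2_emb p) z ^ 2"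
    by (simp only: two sq add_0_right)
  finally show ?case by (simp add: map_gf2_pCons pCons.IH)
qed simp

lemma poly_map_gf2_power2:
  assumes "(1::'f::comm_ring_1) + 1 = 0"
  shows "poly (map_poly (gf2_emb :: bit \<Rightarrow> 'f) p) (z ^ (2 ^ i)) = (poly (map_poly gf2_emb p) z) ^ (2 ^ i)"
proof (induction i)
  case (Suc i)
  have "w ^ (2 ^ Suc i) = (w ^ (2 ^ i)) ^ 2" for w :: 'f by (simp only: power_Suc2 power_mult)
  then show ?case by (simp only: poly_map_gf2_square[OF assms] Suc)
qed simp

lemma finite_field_power_card:
  fixes x :: "'f::{field,finite}"
  assumes "x \<noteq> 0"
  shows "x ^ (card (UNIV :: 'f set) - 1) = 1"
proof -
  have "(\<Prod>y\<in>UNIV-{0}. x * y) = x ^ (card (UNIV :: 'f set) - 1) * \<Prod>(UNIV-{0::'f})"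
    by (simp add: prod.distrib card_Diff_singleton)
  also have "(\<Prod>y\<in>UNIV-{0}. x * y) = (\<Prod>y\<in>UNIV-{0::'f}. y)"
    by (rule prod.reindex_bij_witness[of _ "\<lambda>y. y / x" "\<lambda>y. x * y"]) (use assms in auto)
  finally have "1 * \<Prod>(UNIV-{0::'f}) = x ^ (card (UNIV :: 'f set) - 1) * \<Prod>(UNIV-{0::'f})" by simp
  moreover have "\<Prod>(UNIV-{0::'f}) \<noteq> 0" by simp
  ultimately show ?thesis by (metis mult_right_cancel)
qed

text \<open>A field with 2^L elements (L \<ge> 1) has characteristic 2, since (-1)^(2^L - 1) = 1.\<close>
lemma finite_field_char2:
  assumes "card (UNIV :: 'f::{field,finite} set) = 2 ^ L" "L \<ge> 1"
  shows "(1::'f) + 1 = 0"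
proof -
  have "(-1::'f) ^ (2 ^ L - 1) = 1" using finite_field_power_card[of "-1::'f"] assms(1) by simp
  moreover have "odd ((2::nat) ^ L - 1)" using assms(2) by (simp add: odd_pos)
  ultimately have "(-1::'f) = 1" by simp
  then show ?thesis by (metis add.inverse_inverse add.right_inverse)
qed

section \<open>Roots of binary polynomials\<close>

lemma irreducible_root_dvd_iff:
  assumes "(1::'f::field) + 1 = 0" "irreducible C" "poly (map_poly (gf2_emb :: bit \<Rightarrow> 'f) C) z = 0"
  shows "C dvd R \<longleftrightarrow> poly (map_poly (gf2_emb :: bit \<Rightarrow> 'f) R) z = 0"
proof
  assume "C dvd R"
  then obtain D where "R = C * D" by (auto simp: dvd_def)
  then show "poly (map_poly gf2_emb R) z = 0" using assms(3) by (simp add: map_gf2_mult[OF assms(1)])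
next
  assume R: "poly (map_poly (gf2_emb :: bit \<Rightarrow> 'f) R) z = 0"
  show "C dvd R"
  proof (rule ccontr)
    assume "\<not> C dvd R"
    then have "coprime C R"
      using assms(2) by (simp add: prime_elem_imp_coprime prime_elem_iff_irreducible)
    then obtain u v where "u * C + v * R = 1"
      using bezout_coefficients_fst_snd[of C R] by auto
    then have "poly (map_poly (gf2_emb :: bit \<Rightarrow> 'f) (u * C + v * R)) z = 1" by simp
    then show False using assms(3) R by (simp add: map_gf2_add[OF assms(1)] map_gf2_mult[OF assms(1)])
  qed
qed

text \<open>In particular C divides x^e - 1 iff z^e = 1: the divisibility conditions defining
  primitivity are statements about the order of a root.\<close>
lemma irreducible_dvd_x_power_minus_one_iff:
  assumes "(1::'f::field) + 1 = 0" "irreducible C" "poly (map_poly (gf2_emb :: bit \<Rightarrow> 'f) C) z = 0"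
  shows "C dvd (monom 1 e - 1) \<longleftrightarrow> z ^ e = 1"
  using irreducible_root_dvd_iff[OF assms, of "monom 1 e - 1"]
  by (simp add: map_gf2_diff[OF assms(1)] map_poly_monom poly_monom)

lemma primitive_root_order:
  assumes "(1::'f::field) + 1 = 0" "primitive_poly C" "degree C = L"
    "poly (map_poly (gf2_emb :: bit \<Rightarrow> 'f) C) z = 0"
  shows "z ^ e = 1 \<longleftrightarrow> (2 ^ L - 1) dvd e"
proof -
  define M where "M = (2::nat) ^ L - 1"
  note C = primitive_poly_basics[OF assms(2,3)]
  note key = irreducible_dvd_x_power_minus_one_iff[OF assms(1) C(2) assms(4)]
  have zM: "z ^ M = 1" using C(4) key unfolding M_def by blast
  have nz: "z ^ r \<noteq> 1" if "0 < r" "r < M" for r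
    using assms(2,3) key that unfolding primitive_poly_def M_def by blast
  have "z ^ e = z ^ (M * (e div M) + e mod M)" by simp
  also have "\<dots> = (z ^ M) ^ (e div M) * z ^ (e mod M)" by (simp only: power_add power_mult)
  finally have "z ^ e = z ^ (e mod M)" using zM by simp
  moreover have "e mod M < M" using two_power_minus_one_pos[OF C(1)] by (simp add: M_def)
  ultimately have "z ^ e = 1 \<longleftrightarrow> e mod M = 0" using nz by fastforce
  then show ?thesis unfolding M_def[symmetric] by (simp add: mod_eq_0_iff_dvd)
qed

lemma order_power_coprime:
  fixes z :: "'a::monoid_mult"
  assumes "\<And>e. z ^ e = 1 \<longleftrightarrow> M dvd e" "coprime M E"
  shows "(z ^ E) ^ e = 1 \<longleftrightarrow> M dvd e"
  using assms(1)[of "E * e"] coprime_dvd_mult_right_iff[OF assms(2)] by (simp add: power_mult)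

lemma frobenius_conjugates_distinct:
  fixes \<mu> :: "'f::field"
  assumes order: "\<And>e. \<mu> ^ e = 1 \<longleftrightarrow> (2 ^ L - 1) dvd e"
  shows "inj_on (\<lambda>i. \<mu> ^ (2 ^ i)) {..<L}"
proof -
  define M where "M = (2::nat) ^ L - 1"
  have no_collision: False if ij: "i < j" "j < L" "\<mu> ^ (2 ^ i) = \<mu> ^ (2 ^ j)" for i j
  proof -
    have M1: "M \<ge> 1" using two_power_minus_one_pos[of L] ij by (simp add: M_def)
    have "\<mu> \<noteq> 0"
    proof
      assume "\<mu> = 0"
      then have "\<mu> ^ M = 0" using M1 by simp
      moreover have "\<mu> ^ M = 1" using order[of M] by (simp add: M_def)
      ultimately show False by simp
    qed
    define d where "d = (2::nat) ^ j - 2 ^ i"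
    have "(2::nat) ^ i \<le> 2 ^ j" using ij by simp
    then have "\<mu> ^ (2 ^ j) = \<mu> ^ (2 ^ i) * \<mu> ^ d" by (simp add: d_def power_add[symmetric])
    then have "\<mu> ^ (2 ^ i) * \<mu> ^ d = \<mu> ^ (2 ^ i) * 1" using ij(3) by simp
    then have "\<mu> ^ d = 1" using \<open>\<mu> \<noteq> 0\<close> by simp
    then have "M dvd d" using order unfolding M_def by blast
    moreover have "d = 2 ^ i * (2 ^ (j - i) - 1)"
    proof -
      have "(2::nat) ^ j = 2 ^ i * 2 ^ (j - i)" using ij by (simp add: power_add[symmetric])
      then show ?thesis by (simp add: d_def diff_mult_distrib2)
    qed
    moreover have "coprime M (2 ^ i)" using ij by (simp add: M_def)
    ultimately have dv: "M dvd 2 ^ (j - i) - 1" by (simp add: coprime_dvd_mult_right_iff)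
    have "1 \<le> j - i" using ij by simp
    then have pos: "0 < (2::nat) ^ (j - i) - 1" using two_power_minus_one_pos by fastforce
    have "(2::nat) ^ (j - i) < 2 ^ L" using ij by (intro power_strict_increasing) auto
    then have "(2::nat) ^ (j - i) - 1 < M" unfolding M_def using pos by linarith
    then show False using dvd_imp_le[OF dv pos] by simp
  qed
  show ?thesis
  proof (rule inj_onI)
    fix i j assume "i \<in> {..<L}" "j \<in> {..<L}" "\<mu> ^ (2 ^ i) = \<mu> ^ (2 ^ j)"
    then show "i = j" using no_collision[of i j] no_collision[of j i] by (metis lessThan_iff linorder_neqE_nat)
  qed
qed

lemma prod_roots_dvd:
  fixes p :: "'f::field poly"
  assumes "finite I" "inj_on g I" "p \<noteq> 0" "\<forall>i\<in>I. poly p (g i) = 0"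
  shows "(\<Prod>i\<in>I. [:-(g i), 1:]) dvd p"
  using assms
proof (induction I arbitrary: p rule: finite_induct)
  case (insert i I)
  obtain q where p: "p = [:-(g i), 1:] * q"
    using insert.prems(3) by (auto simp: poly_eq_0_iff_dvd dvd_def)
  have "q \<noteq> 0" using p insert.prems(2) by auto
  moreover have "\<forall>j\<in>I. poly q (g j) = 0"
  proof
    fix j assume j: "j \<in> I"
    then have "g j \<noteq> g i" using insert.prems(1) insert.hyps(2) by (auto simp: inj_on_def)
    moreover have "poly p (g j) = 0" using insert.prems(3) j by simp
    ultimately show "poly q (g j) = 0" using p by simp
  qed
  ultimately have "(\<Prod>i\<in>I. [:-(g i), 1:]) dvd q"
    using insert.IH insert.prems(1) by (auto simp: inj_on_def)
  then show ?case unfolding p prod.insert[OF insert.hyps] by (rule mult_dvd_mono[OF dvd_refl])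
qed simp


section \<open>The minimal polynomial of an element of GF(2^L)\<close>

lemma poly_map_gf2_sum:
  assumes "degree Q \<le> N"
  shows "poly (map_poly (gf2_emb :: bit \<Rightarrow> 'f::comm_ring_1) Q) z = (\<Sum>i\<le>N. gf2_emb (coeff Q i) * z ^ i)"
proof -
  have "degree (map_poly (gf2_emb :: bit \<Rightarrow> 'f) Q) \<le> N"
    by (rule order.trans[OF map_poly_degree_leq assms])
  then have "poly (map_poly (gf2_emb :: bit \<Rightarrow> 'f) Q) z
      = (\<Sum>i\<le>N. coeff (map_poly (gf2_emb :: bit \<Rightarrow> 'f) Q) i * z ^ i)"
    unfolding poly_altdef by (intro sum.mono_neutral_left) (auto simp: coeff_eq_0)
  then show ?thesis by (simp add: coeff_map_gf2)
qed

text \<open>Pigeonhole: the 2^(L+1) binary combinations of 1, z, \<dots>, z^L cannot be distinct in a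
  field with 2^L elements, so z is a root of a nonzero binary polynomial of degree \<le> L.\<close>
lemma exists_annihilating_poly:
  fixes z :: "'f::{field,finite}"
  assumes char: "(1::'f) + 1 = 0" and card: "card (UNIV :: 'f set) = 2 ^ L"
  shows "\<exists>R::bit poly. R \<noteq> 0 \<and> degree R \<le> L \<and> poly (map_poly gf2_emb R) z = 0"
proof -
  define A where "A = PiE {..L} (\<lambda>_. UNIV :: bit set)"
  define \<phi> where "\<phi> c = (\<Sum>i\<le>L. (gf2_emb (c i) :: 'f) * z ^ i)" for c :: "nat \<Rightarrow> bit"
  have "\<not> inj_on \<phi> A"
  proof
    assume "inj_on \<phi> A"
    then have "card (\<phi> ` A) = 2 ^ Suc L" by (simp add: card_image A_def card_PiE card_UNIV_bit)
    moreover have "card (\<phi> ` A) \<le> card (UNIV :: 'f set)" by (rule card_mono) auto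
    ultimately show False using card by simp
  qed
  then obtain c d where cd: "c \<in> A" "d \<in> A" "c \<noteq> d" "\<phi> c = \<phi> d" unfolding inj_on_def by blast
  obtain i0 where i0: "i0 \<le> L" "c i0 \<noteq> d i0"
    using cd(1-3) PiE_ext[of c "{..L}" "\<lambda>_. UNIV" d] unfolding A_def by auto
  define R where "R = (\<Sum>i\<le>L. monom (c i - d i) i)"
  have cR: "coeff R k = (if k \<le> L then c k - d k else 0)" for k
    unfolding R_def coeff_sum coeff_monom by (simp add: sum.delta)
  have "coeff R i0 \<noteq> 0"
    using i0 by (simp only: cR if_True eq_iff_diff_eq_0[symmetric] not_False_eq_True)
  then have R0: "R \<noteq> 0" by auto
  have dR: "degree R \<le> L" by (rule degree_le) (simp add: cR)
  have "poly (map_poly gf2_emb R) z = (\<Sum>i\<le>L. (gf2_emb (coeff R i) :: 'f) * z ^ i)"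
    by (rule poly_map_gf2_sum[OF dR])
  also have "\<dots> = (\<Sum>i\<le>L. (gf2_emb (c i) - gf2_emb (d i)) * z ^ i)"
  proof (rule sum.cong[OF refl])
    fix i assume "i \<in> {..L}"
    then have "coeff R i = c i - d i" using cR[of i] by simp
    then show "(gf2_emb (coeff R i) :: 'f) * z ^ i = (gf2_emb (c i) - gf2_emb (d i)) * z ^ i"
      by (simp only: gf2_emb_diff[OF char])
  qed
  also have "\<dots> = \<phi> c - \<phi> d" by (simp add: \<phi>_def sum_subtractf left_diff_distrib)
  finally show ?thesis using R0 dR cd(4) by auto
qed

lemma irreducible_factor_root:
  fixes z :: "'f::field"
  assumes char: "(1::'f) + 1 = 0"
  shows "R \<noteq> 0 \<Longrightarrow> poly (map_poly gf2_emb R) z = 0 \<Longrightarrow>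
    \<exists>P. irreducible P \<and> P dvd R \<and> poly (map_poly gf2_emb P) z = 0"
proof (induction "degree R" arbitrary: R rule: less_induct)
  case less
  have "\<not> is_unit R"
  proof
    assume "is_unit R"
    then obtain S where "1 = R * S" by (auto simp: dvd_def)
    then have "map_poly (gf2_emb :: bit \<Rightarrow> 'f) R * map_poly gf2_emb S = 1"
      using map_gf2_mult[OF char, of R S] by simp
    then have "poly (map_poly (gf2_emb :: bit \<Rightarrow> 'f) R) z * poly (map_poly gf2_emb S) z = 1"
      by (metis poly_1 poly_mult)
    then show False using less.prems(2) by simp
  qed
  then obtain b where b: "b dvd R" "prime b" using prime_divisor_exists[OF less.prems(1)] by blast
  then obtain c where R: "R = b * c" by (auto simp: dvd_def)
  have irrb: "irreducible b" using b(2) by (simp add: prime_elem_imp_irreducible)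
  have b0: "b \<noteq> 0" and c0: "c \<noteq> 0" using R less.prems(1) by auto
  have "poly (map_poly (gf2_emb :: bit \<Rightarrow> 'f) b) z * poly (map_poly gf2_emb c) z = 0"
    using less.prems(2) unfolding R by (simp add: map_gf2_mult[OF char])
  then consider "poly (map_poly (gf2_emb :: bit \<Rightarrow> 'f) b) z = 0"
    | "poly (map_poly (gf2_emb :: bit \<Rightarrow> 'f) c) z = 0"
    by auto
  then show ?case
  proof cases
    case 1 then show ?thesis using irrb b(1) by blast
  next
    case 2
    have "\<not> is_unit b" using irrb irreducible_not_unit by blast
    then have "degree b \<ge> 1" using b0 is_unit_iff_degree by fastforce
    then have "degree c < degree R" using R b0 c0 by (simp add: degree_mult_eq)
    then obtain P where "irreducible P" "P dvd c" "poly (map_poly gf2_emb P) z = 0"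
      using less.hyps[OF _ c0 2] by blast
    then show ?thesis using R by (meson dvd_mult_left dvd_trans dvd_triv_right)
  qed
qed

lemma exists_irreducible_root:
  fixes z :: "'f::{field,finite}"
  assumes char: "(1::'f) + 1 = 0" and card: "card (UNIV :: 'f set) = 2 ^ L"
  shows "\<exists>P. irreducible P \<and> degree P \<le> L \<and> poly (map_poly gf2_emb P) z = 0"
proof -
  obtain R where R: "R \<noteq> 0" "degree R \<le> L" "poly (map_poly gf2_emb R) z = 0"
    using exists_annihilating_poly[OF char card] by blast
  obtain P where P: "irreducible P" "P dvd R" "poly (map_poly gf2_emb P) z = 0"
    using irreducible_factor_root[OF char R(1) R(3)] by blast
  have "degree P \<le> L" using dvd_imp_degree_le[OF P(2) R(1)] R(2) by linarith
  then show ?thesis using P by blast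
qed

lemma irreducible_splits_into_conjugates:
  fixes \<mu> :: "'f::field"
  assumes char: "(1::'f) + 1 = 0" and "P \<noteq> 0" "degree P \<le> L"
    and root: "poly (map_poly gf2_emb P) \<mu> = 0" and inj: "inj_on (\<lambda>i. \<mu> ^ (2 ^ i)) {..<L}"
  shows "map_poly gf2_emb P = (\<Prod>i<L. [:\<mu> ^ (2 ^ i), 1:])" "degree P = L"
proof -
  define D where "D = (\<Prod>i<L. [:\<mu> ^ (2 ^ i), 1:])"
  have "lead_coeff P \<noteq> 0" using assms(2) by simp
  then have lP: "lead_coeff P = 1" by (simp only: bit_not_zero_iff)
  have degP: "degree (map_poly (gf2_emb :: bit \<Rightarrow> 'f) P) = degree P"
    by (rule map_poly_degree_eq) (simp add: lP)
  have lmP: "lead_coeff (map_poly (gf2_emb :: bit \<Rightarrow> 'f) P) = 1"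
    by (simp add: degP coeff_map_gf2 lP)
  then have mP0: "map_poly (gf2_emb :: bit \<Rightarrow> 'f) P \<noteq> 0" by auto
  have D: "D = (\<Prod>i<L. [:-(\<mu> ^ (2 ^ i)), 1:])" by (simp add: D_def char2_uminus[OF char])
  have "D dvd map_poly gf2_emb P"
    unfolding D using poly_map_gf2_power2[OF char] root
    by (intro prod_roots_dvd[OF _ inj mP0]) auto
  then obtain c where c: "map_poly gf2_emb P = D * c" by (auto simp: dvd_def)
  have "c \<noteq> 0" "D \<noteq> 0" using c mP0 by auto
  moreover have "degree D = L" by (simp add: D_def degree_prod_eq_sum_degree)
  ultimately have "degree (map_poly (gf2_emb :: bit \<Rightarrow> 'f) P) = L + degree c"
    using c by (simp add: degree_mult_eq)
  then have dc: "degree c = 0" and "degree P = L" using degP assms(3) by linarith+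
  moreover have "lead_coeff c = 1" using lmP c by (simp add: D_def lead_coeff_mult lead_coeff_prod)
  ultimately have "c = 1" by (metis coeff_pCons_0 degree_eq_zeroE one_pCons)
  then show "map_poly gf2_emb P = (\<Prod>i<L. [:\<mu> ^ (2 ^ i), 1:])" using c by (simp add: D_def)
  show "degree P = L" by fact
qed

lemma primitive_poly_of_root_order:
  fixes \<mu> :: "'f::field"
  assumes char: "(1::'f) + 1 = 0" and irr: "irreducible P" and deg: "degree P = L"
    and root: "poly (map_poly gf2_emb P) \<mu> = 0" and order: "\<And>e. \<mu> ^ e = 1 \<longleftrightarrow> (2 ^ L - 1) dvd e"
  shows "primitive_poly P"
proof -
  have key: "P dvd (monom 1 e - 1) \<longleftrightarrow> (2 ^ L - 1) dvd e" for e
    using irreducible_dvd_x_power_minus_one_iff[OF char irr root] order by simp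
  have "P \<noteq> 0" using irr by auto
  then have "lead_coeff P \<noteq> 0" by simp
  then have "lead_coeff P = 1" by (simp only: bit_not_zero_iff)
  then show ?thesis
    unfolding primitive_poly_def deg using irr key by (auto dest: dvd_imp_le)
qed

lemma minimal_poly_of_power:
  fixes lam :: "'f::{field,finite}"
  assumes card: "card (UNIV :: 'f set) = 2 ^ L"
    and prim: "primitive_poly C" and deg: "degree C = L"
    and root: "poly (map_poly gf2_emb C) lam = 0" and cop: "coprime E (2 ^ L - 1)"
  shows "\<exists>P. primitive_poly P \<and> map_poly gf2_emb P = (\<Prod>i<L. [:lam ^ (2 ^ i * E), 1:])
           \<and> C dvd pcompose P (monom 1 E)"
proof -
  define \<mu> where "\<mu> = lam ^ E"
  have char: "(1::'f) + 1 = 0" using finite_field_char2[OF card primitive_poly_basics(1)[OF prim deg]] .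
  have order: "\<mu> ^ e = 1 \<longleftrightarrow> (2 ^ L - 1) dvd e" for e
    unfolding \<mu>_def using primitive_root_order[OF char prim deg root] cop
    by (intro order_power_coprime) (simp_all add: coprime_commute)
  obtain P where P: "irreducible P" "degree P \<le> L" "poly (map_poly gf2_emb P) \<mu> = 0"
    using exists_irreducible_root[OF char card] by blast
  note split = irreducible_splits_into_conjugates[OF char _ P(2,3) frobenius_conjugates_distinct[OF order]]
  have "P \<noteq> 0" using P(1) by auto
  then have "primitive_poly P"
    using primitive_poly_of_root_order[OF char P(1) _ P(3) order] split(2) by blast
  moreover have "map_poly gf2_emb P = (\<Prod>i<L. [:lam ^ (2 ^ i * E), 1:])"
    using split(1)[OF \<open>P \<noteq> 0\<close>] by (simp add: \<mu>_def power_mult[symmetric] mult.commute)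
  moreover have "poly (map_poly (gf2_emb :: bit \<Rightarrow> 'f) (pcompose P (monom 1 E))) lam = 0"
    using P(3) by (simp add: map_gf2_pcompose[OF char] poly_pcompose map_poly_monom poly_monom \<mu>_def)
  then have "C dvd pcompose P (monom 1 E)"
    using irreducible_root_dvd_iff[OF char primitive_poly_basics(2)[OF prim deg] root] by blast
  ultimately show ?thesis by blast
qed

theorem lemma2:
  fixes L1 L2 :: nat
    and C1 C2 :: "bit poly"
    and a b :: "nat \<Rightarrow> bit"
    and lam :: "'f::{field,finite}"
  assumes "L1 < L2" and "coprime L1 L2"
    and "primitive_poly C1" and "degree C1 = L1" and "satisfies_rec C1 a" and "a \<noteq> (\<lambda>_. 0)"
    and "primitive_poly C2" and "degree C2 = L2" and "satisfies_rec C2 b" and "b \<noteq> (\<lambda>_. 0)"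
    and "card (UNIV :: 'f set) = 2 ^ L2"
    and "poly (map_poly gf2_emb C2) lam = 0"
  shows "\<exists>P N. primitive_poly P \<and> char_poly_seq (shrunken a b) (P ^ N) \<and>
           map_poly gf2_emb P = (\<Prod>i<L2. [:lam ^ (2 ^ i * (2 ^ L1 - 1)), 1:])"
proof -
  define E where "E = (2::nat) ^ L1 - 1"
  obtain P where P: "primitive_poly P" "map_poly gf2_emb P = (\<Prod>i<L2. [:lam ^ (2 ^ i * E), 1:])"
      "C2 dvd pcompose P (monom 1 E)"
    using minimal_poly_of_power[OF assms(11,7,8,12)] coprime_mersenne[OF assms(2)]
    unfolding E_def by blast
  have "shrunken a b (k + 2 ^ (L1 - 1) * m) = b (enumerate {n. a n = 1} k + E * m)" for k m
    using shrunken_decimation[OF _ mseq_count_ones[OF assms(3-6)]]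
      mseq_period[OF assms(3-5)] unfolding E_def by simp
  moreover have "satisfies_rec (pcompose P (monom 1 E)) b"
    using satisfies_rec_dvd[OF assms(9) P(3)] .
  ultimately have "satisfies_rec (P ^ (2 ^ (L1 - 1))) (shrunken a b)"
    by (intro decimation_annihilator) auto
  then obtain N where "char_poly_seq (shrunken a b) (P ^ N)"
    using char_poly_seq_power primitive_poly_basics(2,3)[OF P(1) refl] by blast
  then show ?thesis using P(1,2) unfolding E_def by blast
qed

end
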